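(* Let $A\subset\mathbb{R}$ be a finite set. Then there exists a subset $A'\subseteq A$ with $|A'|\geq |A|/2$ such that for all $a\in A'$, $$|A(A+a)|\gg |A|^{3/2},$$ where $A(A+a)=\{b(c+a): b,c\in A\}$.
   Context: $X\gg Y$ means $X\geq cY$ for some absolute constant $c>0$ (independent of $A$ and $a$). *)

theory Defs
  imports Complex_Main
begin

definition shift_prod_set :: "real set \<Rightarrow> real \<Rightarrow> real set" where
  "shift_prod_set A a = {b * (c + a) | b c. b \<in> A \<and> c \<in> A}"

end

theory Submission
  imports Defs "HOL-Analysis.Analysis"
begin

text \<open>Identify a pair (b, c) \<in> (A - {0}) \<times> A with the line x \<mapsto> b (x + c); its value at a \<in> A lies in
  A(A+a), so at a point a with |A(A+a)| \<le> S the |L| \<approx> |A|^2 lines take at most S values.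
  Let a < a' be consecutive such points. Cutting both orderings of the values into blocks of
  \<beta> \<approx> \<surd>|A| consecutive ranks and applying Cauchy--Schwarz to the sum of the two block indices shows
  that about |L|^2 \<beta> / S pairs of lines swap their order between a and a'. Two lines swap order at
  most once, so the swap sets of different gaps are disjoint and together have at most |L|^2
  elements. With S \<le> c |A|^(3/2) this bounds the number of such points by O(c |A|), which is
  less than |A|/2 for small c.\<close>

lemma card_square_le_monochromatic_pairs:
  fixes d :: "'a \<Rightarrow> nat"
  assumes fin: "finite I" and colours: "\<forall>i\<in>I. d i < Q"
  shows "real (card I)^2 \<le> real Q * real (card {p\<in>I\<times>I. d (fst p) = d (snd p)})"
proof -
  define W where "W q = {i\<in>I. d i = q}" for q
  have I_eq: "I = (\<Union>q\<in>{..<Q}. W q)" using colours by (auto simp: W_def)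
  have card_I: "card I = (\<Sum>q<Q. card (W q))"
    unfolding I_eq by (rule card_UN_disjoint) (auto simp: fin W_def)
  have pairs_eq: "{p\<in>I\<times>I. d (fst p) = d (snd p)} = (\<Union>q\<in>{..<Q}. W q \<times> W q)"
    using colours by (auto simp: W_def)
  have card_pairs: "card {p\<in>I\<times>I. d (fst p) = d (snd p)} = (\<Sum>q<Q. card (W q) * card (W q))"
    unfolding pairs_eq
    by (subst card_UN_disjoint) (auto simp: fin W_def card_cartesian_product)
  have "real (card I)^2 = (\<Sum>q<Q. 1 * real (card (W q)))^2" by (simp add: card_I)
  also have "\<dots> \<le> (\<Sum>q<Q. 1^2) * (\<Sum>q<Q. (real (card (W q)))^2)"
    by (rule Cauchy_Schwarz_ineq_sum)
  also have "\<dots> = real Q * real (card {p\<in>I\<times>I. d (fst p) = d (snd p)})"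
    by (simp add: card_pairs power2_eq_square)
  finally show ?thesis .
qed

definition order_rank :: "'a::linorder set \<Rightarrow> 'a \<Rightarrow> nat" where
  "order_rank P y = card {z\<in>P. z < y}"

lemma order_rank_mono: "finite P \<Longrightarrow> y \<le> y' \<Longrightarrow> order_rank P y \<le> order_rank P y'"
  unfolding order_rank_def by (rule card_mono) auto

lemma order_rank_strict_mono: "finite P \<Longrightarrow> y \<in> P \<Longrightarrow> y < y' \<Longrightarrow> order_rank P y < order_rank P y'"
  unfolding order_rank_def by (rule psubset_card_mono) auto

lemma less_of_order_rank_less: "finite P \<Longrightarrow> order_rank P y < order_rank P y' \<Longrightarrow> y < y'"
  using order_rank_mono[of P y' y] by (meson linorder_not_less)

lemma order_rank_less_card: "finite P \<Longrightarrow> y \<in> P \<Longrightarrow> order_rank P y < card P"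
  unfolding order_rank_def by (rule psubset_card_mono) auto

lemma inj_on_order_rank: "finite P \<Longrightarrow> inj_on (order_rank P) P"
  unfolding inj_on_def by (metis linorder_neqE nat_neq_iff order_rank_strict_mono)

definition block :: "'a::linorder set \<Rightarrow> nat \<Rightarrow> 'a \<Rightarrow> nat" where
  "block P \<beta> y = order_rank P y div \<beta>"

lemma card_block_le:
  assumes "finite P" "\<beta> > 0"
  shows "card {y\<in>P. block P \<beta> y = u} \<le> \<beta>"
proof -
  have "card {y\<in>P. block P \<beta> y = u} \<le> card {u*\<beta>..<u*\<beta>+\<beta>}"
  proof (rule card_inj_on_le)
    show "inj_on (order_rank P) {y\<in>P. block P \<beta> y = u}"
      using inj_on_order_rank[OF assms(1)] by (rule inj_on_subset) auto
    show "order_rank P ` {y\<in>P. block P \<beta> y = u} \<subseteq> {u*\<beta>..<u*\<beta>+\<beta>}"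
      using assms(2) by (auto simp: block_def dividend_less_times_div div_times_less_eq_dividend
          mult.commute add.commute)
  qed auto
  then show ?thesis by simp
qed

lemma less_of_block_less: "finite P \<Longrightarrow> block P \<beta> y < block P \<beta> y' \<Longrightarrow> y < y'"
  unfolding block_def by (meson div_le_mono less_of_order_rank_less not_le)

lemma block_le: "finite P \<Longrightarrow> y \<in> P \<Longrightarrow> card P \<le> S \<Longrightarrow> block P \<beta> y \<le> S div \<beta>"
  unfolding block_def by (meson div_le_mono order_rank_less_card less_imp_le_nat le_trans)

definition swaps :: "('a \<Rightarrow> 'b::linorder) \<Rightarrow> ('a \<Rightarrow> 'b) \<Rightarrow> 'a set \<Rightarrow> ('a \<times> 'a) set" where
  "swaps f g L = {p\<in>L\<times>L. f (fst p) < f (snd p) \<and> g (snd p) < g (fst p)}"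

lemma card_same_blocks_le:
  fixes f g :: "'a \<Rightarrow> 'b::linorder"
  assumes fin: "finite L" and inj: "inj_on (\<lambda>l. (f l, g l)) L" and "\<beta> > 0"
  defines "u l \<equiv> block (f ` L) \<beta> (f l)" and "w l \<equiv> block (g ` L) \<beta> (g l)"
  shows "card {p\<in>L\<times>L. u (fst p) = u (snd p) \<and> w (fst p) = w (snd p)} \<le> card L * \<beta>^2"
proof -
  define F where "F l = {l'\<in>L. u l' = u l \<and> w l' = w l}" for l
  have "{p\<in>L\<times>L. u (fst p) = u (snd p) \<and> w (fst p) = w (snd p)} = Sigma L F"
    by (auto simp: F_def)
  then have "card {p\<in>L\<times>L. u (fst p) = u (snd p) \<and> w (fst p) = w (snd p)} = (\<Sum>l\<in>L. card (F l))"
    using fin by (simp add: F_def)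
  also have "\<dots> \<le> (\<Sum>l\<in>L. \<beta>^2)"
  proof (rule sum_mono)
    fix l
    let ?blocks = "{y\<in>f ` L. block (f ` L) \<beta> y = u l} \<times> {y\<in>g ` L. block (g ` L) \<beta> y = w l}"
    have "card (F l) \<le> card ?blocks"
      using inj fin by (intro card_inj_on_le[where f="\<lambda>l. (f l, g l)"])
        (auto simp: F_def u_def w_def intro: inj_on_subset)
    also have "\<dots> \<le> \<beta> * \<beta>"
      using card_block_le[of "f ` L" \<beta>] card_block_le[of "g ` L" \<beta>] fin \<open>\<beta> > 0\<close>
      by (simp add: card_cartesian_product mult_le_mono)
    finally show "card (F l) \<le> \<beta>^2" by (simp add: power2_eq_square)
  qed
  finally show ?thesis by simp
qed

lemma card_square_le_swaps:
  fixes f g :: "'a \<Rightarrow> 'b::linorder" and \<beta> S :: nat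
  assumes fin: "finite L" and inj: "inj_on (\<lambda>l. (f l, g l)) L" and "\<beta> > 0"
    and card_f: "card (f ` L) \<le> S" and card_g: "card (g ` L) \<le> S"
  shows "real (card L)^2
    \<le> real (2 * (S div \<beta>) + 2) * (2 * real (card (swaps f g L)) + real \<beta>^2 * real (card L))"
proof -
  define u where "u l = block (f ` L) \<beta> (f l)" for l
  define w where "w l = block (g ` L) \<beta> (g l)" for l
  define X where "X = swaps f g L"
  define E where "E = {p\<in>L\<times>L. u (fst p) + w (fst p) = u (snd p) + w (snd p)}"
  define E1 where "E1 = {p\<in>L\<times>L. u (fst p) = u (snd p) \<and> w (fst p) = w (snd p)}"
  have "\<forall>l\<in>L. u l + w l < 2 * (S div \<beta>) + 2"
    using block_le[of "f ` L" _ S \<beta>] block_le[of "g ` L" _ S \<beta>] fin card_f card_g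
    by (fastforce simp: u_def w_def)
  then have cauchy_schwarz: "real (card L)^2 \<le> real (2 * (S div \<beta>) + 2) * real (card E)"
    unfolding E_def by (rule card_square_le_monochromatic_pairs[OF fin])
  have swap: "p \<in> X" if "p \<in> E" "u (fst p) < u (snd p)" for p
  proof -
    have "w (snd p) < w (fst p)" using that by (auto simp: E_def)
    then have "g (snd p) < g (fst p)"
      using less_of_block_less[of "g ` L"] fin by (simp add: w_def)
    moreover have "f (fst p) < f (snd p)"
      using that(2) less_of_block_less[of "f ` L"] fin by (simp add: u_def)
    ultimately show ?thesis using that(1) by (simp add: E_def X_def swaps_def)
  qed
  have "E \<subseteq> E1 \<union> X \<union> prod.swap ` X"
  proof
    fix p assume p: "p \<in> E"
    have "prod.swap p \<in> E" using p by (auto simp: E_def)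
    then have "u (snd p) < u (fst p) \<Longrightarrow> p \<in> prod.swap ` X"
      using swap[of "prod.swap p"] by (cases p) force
    moreover have "u (fst p) = u (snd p) \<Longrightarrow> p \<in> E1" using p by (auto simp: E_def E1_def)
    ultimately show "p \<in> E1 \<union> X \<union> prod.swap ` X"
      using swap[OF p] by (meson UnI1 UnI2 linorder_neqE_nat)
  qed
  moreover have "finite X" "finite E1"
    using fin by (auto simp: X_def swaps_def E1_def intro: finite_subset[of _ "L \<times> L"])
  ultimately have "card E \<le> card E1 + card X + card X"
    by (meson card_Un_le card_image_le card_mono finite_UnI finite_imageI add_le_mono le_trans)
  moreover have "card E1 \<le> card L * \<beta>^2"
    unfolding E1_def u_def w_def by (rule card_same_blocks_le[OF fin inj \<open>\<beta> > 0\<close>])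
  ultimately have "card E \<le> 2 * card X + \<beta>^2 * card L" by (simp add: mult.commute)
  then have "real (card E) \<le> 2 * real (card X) + real \<beta>^2 * real (card L)"
    by (metis of_nat_add of_nat_le_iff of_nat_mult of_nat_numeral of_nat_power)
  then show ?thesis
    using cauchy_schwarz unfolding X_def by (smt (verit) mult_left_mono of_nat_0_le_iff)
qed

definition eval_line :: "'a::linordered_idom \<Rightarrow> 'a \<times> 'a \<Rightarrow> 'a" where
  "eval_line x l = fst l * (x + snd l)"

lemma inj_on_eval_line_pair:
  fixes a a' :: "'a::linordered_idom"
  assumes "a \<noteq> a'"
  shows "inj_on (\<lambda>l. (eval_line a l, eval_line a' l)) {l. fst l \<noteq> 0}"
proof (rule inj_onI)
  fix l l' :: "'a \<times> 'a"
  assume "l \<in> {l. fst l \<noteq> 0}" and "(eval_line a l, eval_line a' l) = (eval_line a l', eval_line a' l')"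
  moreover obtain b c b' c' where "l = (b, c)" "l' = (b', c')" by force
  ultimately have b0: "b \<noteq> 0" and e: "b * (a + c) = b' * (a + c')" "b * (a' + c) = b' * (a' + c')"
    by (auto simp: eval_line_def)
  have "b * (a - a') = b' * (a - a')" using e by (simp add: algebra_simps)
  then have "b = b'" using assms by simp
  moreover from this have "c = c'" using e(1) b0 by (simp add: algebra_simps)
  ultimately show "l = l'" using \<open>l = (b, c)\<close> \<open>l' = (b', c')\<close> by simp
qed

lemma lines_cross_at_most_once:
  fixes x1 x2 x3 :: "'a::linordered_idom"
  assumes "x1 < x2" "x2 \<le> x3"
    and "eval_line x1 l < eval_line x1 l'" "eval_line x2 l' < eval_line x2 l"
  shows "\<not> eval_line x3 l < eval_line x3 l'"
proof
  define g where "g x = eval_line x l' - eval_line x l" for x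
  have slope: "g y - g x = (fst l' - fst l) * (y - x)" for x y
    by (simp add: g_def eval_line_def algebra_simps)
  assume "eval_line x3 l < eval_line x3 l'"
  then have "g x1 > 0" "g x2 < 0" "g x3 > 0" using assms(3,4) by (auto simp: g_def)
  then have "(fst l' - fst l) * (x2 - x1) < 0" using slope[of x2 x1] by linarith
  then have "fst l' - fst l < 0" using assms(1) by (simp add: mult_less_0_iff)
  then have "(fst l' - fst l) * (x3 - x2) \<le> 0" using assms(2) by (simp add: mult_le_0_iff)
  then show False using slope[of x3 x2] \<open>g x2 < 0\<close> \<open>g x3 > 0\<close> by linarith
qed

definition next_point :: "'a::linorder set \<Rightarrow> 'a \<Rightarrow> 'a" where
  "next_point B a = Min {x\<in>B. a < x}"

lemma next_point:
  assumes "finite B" "a \<in> B - {Max B}"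
  shows "next_point B a \<in> B" "a < next_point B a" "\<And>x. x \<in> B \<Longrightarrow> a < x \<Longrightarrow> next_point B a \<le> x"
proof -
  have "a < Max B" using assms Max_ge[OF assms(1), of a] by (simp add: order.not_eq_order_implies_strict)
  then have "Max B \<in> {x\<in>B. a < x}" using Max_in[OF assms(1)] assms(2) by blast
  then have "{x\<in>B. a < x} \<noteq> {}" by blast
  moreover have "finite {x\<in>B. a < x}" using assms(1) by simp
  ultimately show "next_point B a \<in> B" "a < next_point B a" "\<And>x. x \<in> B \<Longrightarrow> a < x \<Longrightarrow> next_point B a \<le> x"
    using Min_in Min_le unfolding next_point_def by fastforce+
qed

lemma sum_card_swaps_next_point_le:
  fixes L :: "('a::linordered_idom \<times> 'a) set"
  assumes "finite L" "finite B"
  shows "(\<Sum>a\<in>B - {Max B}. card (swaps (eval_line a) (eval_line (next_point B a)) L)) \<le> card L ^ 2"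
proof -
  define X where "X a = swaps (eval_line a) (eval_line (next_point B a)) L" for a
  have X_sub: "X a \<subseteq> L \<times> L" for a by (auto simp: X_def swaps_def)
  have disjoint: "X a \<inter> X a' = {}" if "a \<in> B - {Max B}" "a' \<in> B - {Max B}" "a < a'" for a a'
  proof (rule ccontr)
    assume "X a \<inter> X a' \<noteq> {}"
    then obtain l l' where "(l, l') \<in> X a" "(l, l') \<in> X a'" by auto
    then have "eval_line a l < eval_line a l'" "eval_line (next_point B a) l' < eval_line (next_point B a) l"
      "eval_line a' l < eval_line a' l'"
      by (auto simp: X_def swaps_def)
    moreover have "next_point B a \<le> a'"
      using next_point(3)[OF assms(2) that(1)] that(2,3) by blast
    ultimately show False
      using lines_cross_at_most_once[OF next_point(2)[OF assms(2) that(1)]] by blast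
  qed
  have "(\<Sum>a\<in>B - {Max B}. card (X a)) = card (\<Union>a\<in>B - {Max B}. X a)"
  proof (rule card_UN_disjoint[symmetric])
    show "\<forall>a\<in>B - {Max B}. finite (X a)"
      using X_sub assms(1) by (meson finite_SigmaI finite_subset)
    show "\<forall>a\<in>B - {Max B}. \<forall>a'\<in>B - {Max B}. a \<noteq> a' \<longrightarrow> X a \<inter> X a' = {}"
      using disjoint by (metis inf_commute linorder_neqE)
  qed (use assms(2) in simp)
  also have "\<dots> \<le> card (L \<times> L)"
    using X_sub assms(1) by (intro card_mono) auto
  finally show ?thesis by (simp add: X_def card_cartesian_product power2_eq_square)
qed

lemma card_points_mult_square_le:
  fixes L :: "('a::linordered_idom \<times> 'a) set" and \<beta> S :: nat
  assumes fin: "finite L" and slopes: "\<forall>l\<in>L. fst l \<noteq> 0" and "finite B" "B \<noteq> {}" "\<beta> > 0"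
    and few_values: "\<forall>a\<in>B. card (eval_line a ` L) \<le> S"
  shows "real (card B - 1) * real (card L)^2 \<le> real (2 * (S div \<beta>) + 2) *
    (2 * real (card L)^2 + real (card B - 1) * real \<beta>^2 * real (card L))"
proof -
  define T where "T = B - {Max B}"
  define Q where "Q = real (2 * (S div \<beta>) + 2)"
  define X where "X a = swaps (eval_line a) (eval_line (next_point B a)) L" for a
  have per_gap: "real (card L)^2 \<le> Q * (2 * real (card (X a)) + real \<beta>^2 * real (card L))"
    if "a \<in> T" for a
  proof -
    have "inj_on (\<lambda>l. (eval_line a l, eval_line (next_point B a) l)) L"
      using inj_on_eval_line_pair[of a "next_point B a"] next_point(2)[OF \<open>finite B\<close>, of a]
        that slopes by (auto simp: T_def intro: inj_on_subset)
    moreover have "card (eval_line a ` L) \<le> S" "card (eval_line (next_point B a) ` L) \<le> S"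
      using few_values next_point(1)[OF \<open>finite B\<close>, of a] that by (auto simp: T_def)
    ultimately show ?thesis
      unfolding Q_def X_def by (rule card_square_le_swaps[OF fin _ \<open>\<beta> > 0\<close>])
  qed
  have "real (card T) * real (card L)^2 = (\<Sum>a\<in>T. real (card L)^2)" by simp
  also have "\<dots> \<le> (\<Sum>a\<in>T. Q * (2 * real (card (X a)) + real \<beta>^2 * real (card L)))"
    by (rule sum_mono) (rule per_gap)
  also have "\<dots> = Q * (2 * real (\<Sum>a\<in>T. card (X a)) + real (card T) * real \<beta>^2 * real (card L))"
    by (simp add: sum_distrib_left sum.distrib algebra_simps)
  also have "\<dots> \<le> Q * (2 * real (card L)^2 + real (card T) * real \<beta>^2 * real (card L))"
  proof -
    have "(\<Sum>a\<in>T. card (X a)) \<le> card L ^ 2"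
      unfolding T_def X_def by (rule sum_card_swaps_next_point_le[OF fin \<open>finite B\<close>])
    then have "real (\<Sum>a\<in>T. card (X a)) \<le> real (card L)^2"
      by (metis of_nat_le_iff of_nat_power)
    then show ?thesis by (intro mult_left_mono) (auto simp: Q_def)
  qed
  finally show ?thesis using assms(3,4) by (simp add: T_def Q_def Max_in)
qed

lemma finite_shift_prod_set:
  assumes "finite A"
  shows "finite (shift_prod_set A a)"
proof -
  have "shift_prod_set A a = (\<lambda>p. fst p * (snd p + a)) ` (A \<times> A)"
    unfolding shift_prod_set_def by force
  then show ?thesis using assms by simp
qed

lemma card_eval_line_image_le:
  assumes "finite A" "a \<in> A" "L \<subseteq> A \<times> A"
  shows "card (eval_line a ` L) \<le> card (shift_prod_set A a)"
proof (rule card_mono)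
  show "finite (shift_prod_set A a)" using assms(1) by (rule finite_shift_prod_set)
  show "eval_line a ` L \<subseteq> shift_prod_set A a"
    using assms(2,3) by (force simp: eval_line_def shift_prod_set_def add.commute)
qed

lemma card_nonzero_times_bounds:
  fixes A :: "real set"
  assumes "finite A"
  shows "real (card A) * real (card A) - real (card A) \<le> real (card ((A - {0}) \<times> A))"
    and "real (card ((A - {0}) \<times> A)) \<le> real (card A) * real (card A)"
proof -
  have "real (card A) - 1 \<le> real (card (A - {0}))" "real (card (A - {0})) \<le> real (card A)"
    using assms card_Diff1_le[of A 0] by (auto simp: card_Diff_singleton_if card_gt_0_iff)
  then show "real (card A) * real (card A) - real (card A) \<le> real (card ((A - {0}) \<times> A))"
    and "real (card ((A - {0}) \<times> A)) \<le> real (card A) * real (card A)"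
    using mult_right_mono[of "real (card A) - 1" "real (card (A - {0}))" "real (card A)"]
      mult_right_mono[of "real (card (A - {0}))" "real (card A)" "real (card A)"]
    by (auto simp: card_cartesian_product algebra_simps)
qed

lemma powr_three_halves: "0 \<le> (x::real) \<Longrightarrow> x powr (3/2) = x * sqrt x"
  using powr_add[of x 1 "1/2"] by (cases "x = 0") (simp_all add: powr_half_sqrt)

lemma card_low_points_arith:
  fixes n t l q :: real
  assumes "n \<ge> 200" "t > n/2 - 1" "l \<ge> n*n - n" "l \<le> n*n" "0 \<le> q" "q \<le> n/1000 + 2"
    "0 \<le> b" "b \<le> n" "t * l^2 \<le> q * (2 * l^2 + t * b * l)"
  shows False
proof -
  have t0: "t \<ge> 0" using assms by linarith
  have l0: "l > 0" using assms(1,3) mult_strict_right_mono[of 1 n n] by linarith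
  have "(t * l) * l \<le> (q * (2*l + t*b)) * l"
    using assms(9) by (simp add: power2_eq_square algebra_simps)
  then have "t * l \<le> q * (2*l + t*b)" using l0 by simp
  also have "\<dots> \<le> q * (2*l + t*n)" using assms(5,8) t0 by (simp add: mult_left_mono)
  finally have "t * (l - q*n) \<le> 2*(q*l)" by (simp add: algebra_simps)
  moreover have "l - q*n \<ge> n*n - n - (n/1000+2)*n"
    using assms(3,6,1) by (smt (verit) mult_right_mono)
  moreover have "n*n - n - (n/1000+2)*n \<ge> 0"
    using assms(1) mult_nonneg_nonneg[of n "999/1000*n - 3"] by (simp add: algebra_simps)
  ultimately have "(n/2 - 1) * (n*n - n - (n/1000+2)*n) \<le> 2*(q*l)"
    by (smt (verit, best) assms(2) mult_mono t0)
  moreover have "q*l \<le> (n/1000+2)*(n*n)"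
    using mult_mono[OF assms(6,4)] assms(1) l0 by simp
  moreover have "n*(n*(4975/10000*n - 6499/1000) + 3) > 0"
    using assms(1) by (intro mult_pos_pos add_pos_pos) auto
  moreover have "(n/2 - 1) * (n*n - n - (n/1000+2)*n) - 2*((n/1000+2)*(n*n))
     = n*(n*(4975/10000*n - 6499/1000) + 3)" by (simp add: field_simps)
  ultimately show False by (smt (verit))
qed

lemma card_low_points_le:
  fixes A B :: "real set"
  assumes finA: "finite A" and big: "card A \<ge> 200" and "B \<subseteq> A"
    and low: "\<forall>a\<in>B. real (card (shift_prod_set A a)) < real (card A) * sqrt (card A) / 4000"
  shows "real (card B) \<le> real (card A) / 2"
proof (rule ccontr)
  assume many: "\<not> ?thesis"
  define n where "n = real (card A)"
  define S where "S = nat \<lfloor>n * sqrt n / 4000\<rfloor>"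
  define \<beta> where "\<beta> = nat \<lfloor>sqrt n\<rfloor>"
  define L where "L = (A - {0}) \<times> A"
  have n200: "n \<ge> 200" using big by (simp add: n_def)
  have sqrt_n: "sqrt n \<ge> 14" using real_sqrt_le_mono[of "14^2" n] n200 by simp
  have \<beta>: "real \<beta> \<le> sqrt n" "sqrt n - 1 < real \<beta>" "\<beta> > 0"
    using sqrt_n n200 by (auto simp: \<beta>_def)
  have \<beta>_sq: "real \<beta>^2 \<le> n" using power_mono[OF \<beta>(1), of 2] n200 by simp
  have S_le: "real S \<le> n * sqrt n / 4000"
    using of_int_floor_le[of "n * sqrt n / 4000"] n200 by (simp add: S_def)
  have q_le: "real (2 * (S div \<beta>) + 2) \<le> n / 1000 + 2"
  proof -
    have "real (S div \<beta>) \<le> real S / real \<beta>" by (rule of_nat_div_le_of_nat)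
    also have "\<dots> \<le> (n * sqrt n / 4000) / (sqrt n / 2)"
      using \<beta> sqrt_n n200 S_le by (intro frac_le) auto
    also have "\<dots> = n / 2000" using sqrt_n by (simp add: field_simps)
    finally show ?thesis by simp
  qed
  have few_values: "\<forall>a\<in>B. card (eval_line a ` L) \<le> S"
  proof
    fix a assume "a \<in> B"
    then have "a \<in> A" and "real (card (shift_prod_set A a)) < n * sqrt n / 4000"
      using \<open>B \<subseteq> A\<close> low by (auto simp: n_def)
    have "card (eval_line a ` L) \<le> card (shift_prod_set A a)"
      by (rule card_eval_line_image_le[OF finA \<open>a \<in> A\<close>]) (auto simp: L_def)
    moreover have "int (card (shift_prod_set A a)) \<le> \<lfloor>n * sqrt n / 4000\<rfloor>"
      using \<open>real (card (shift_prod_set A a)) < n * sqrt n / 4000\<close> by linarith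
    ultimately show "card (eval_line a ` L) \<le> S" by (simp add: S_def)
  qed
  have card_L: "n*n - n \<le> real (card L)" "real (card L) \<le> n*n"
    unfolding L_def n_def using card_nonzero_times_bounds[OF finA] by auto
  have B: "finite B" "B \<noteq> {}" "real (card B - 1) > n/2 - 1"
    using many finite_subset[OF \<open>B \<subseteq> A\<close> finA] n200 by (auto simp: n_def)
  have "real (card B - 1) * real (card L)^2 \<le> real (2 * (S div \<beta>) + 2) *
      (2 * real (card L)^2 + real (card B - 1) * real \<beta>^2 * real (card L))"
    using card_points_mult_square_le[OF _ _ B(1,2) \<open>\<beta> > 0\<close> few_values] finA
    by (simp add: L_def)
  then show False
    using card_low_points_arith[OF n200 B(3) card_L of_nat_0_le_iff q_le _ \<beta>_sq] by simp
qed

theorem theorem2p9: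
  shows "\<exists>C::real. C > 0 \<and>
    (\<forall>A::real set. finite A \<longrightarrow>
      (\<exists>A' \<subseteq> A. real (card A') \<ge> real (card A) / 2 \<and>
        (\<forall>a \<in> A'. real (card (shift_prod_set A a)) \<ge> C * real (card A) powr (3/2))))"
proof (intro exI[of _ "1/4000"] conjI allI impI)
  fix A :: "real set" assume finA: "finite A"
  define A' where "A' = {a\<in>A. real (card A) * sqrt (card A) / 4000 \<le> real (card (shift_prod_set A a))}"
  have "real (card A') \<ge> real (card A) / 2"
  proof (cases "card A < 200")
    case True
    have "real (card A) * sqrt (card A) \<le> 200 * 15"
      using True real_sqrt_le_mono[of "card A" "15^2"] by (intro mult_mono) auto
    moreover have "card (shift_prod_set A a) \<ge> 1" if "a \<in> A" for a
      using that finite_shift_prod_set[OF finA, of a] by (force simp: shift_prod_set_def Suc_le_eq card_gt_0_iff)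
    ultimately have "A' = A" by (force simp: A'_def)
    then show ?thesis by simp
  next
    case False
    have "real (card (A - A')) \<le> real (card A) / 2"
      using card_low_points_le[OF finA, of "A - A'"] False by (force simp: A'_def)
    moreover have "card (A - A') = card A - card A'" "card A' \<le> card A"
      using finA by (auto simp: A'_def card_Diff_subset card_mono)
    ultimately show ?thesis by simp
  qed
  then show "\<exists>A'\<subseteq>A. real (card A) / 2 \<le> real (card A') \<and>
      (\<forall>a\<in>A'. 1/4000 * real (card A) powr (3/2) \<le> real (card (shift_prod_set A a)))"
    by (intro exI[of _ A']) (auto simp: A'_def powr_three_halves)
qed simp

end
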